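(* Let $H=(V,E)$ be a graph. (1) Let $\alpha=(\alpha(x))_{x\in V}$ be integers with $\alpha(x)\ge 2$ and let $G$ be $\alpha$-suspended over $H$. If $H$ has a Hamiltonian path, then $G$ has a Hamiltonian path. (2) Let $\ell\ge1$ and let $G$ be $\ell$-suspended over $H$. If $H$ has a Hamiltonian cycle of even length, then $G$ has a Hamiltonian cycle of even length.
   Context: $G$ is $\alpha$-suspended over $H$ if $G$ is the graph on vertex set $\{(x,i): x\in V, 0\le i\le\alpha(x)\}$ which is the union of the paths $((x,0),(x,1),\dots,(x,\alpha(x)))$ for $x\in V$ and the edges $\{(x,0),(y,0)\}$ and $\{(x,\alpha(x)),(y,\alpha(y))\}$ for all $\{x,y\}\in E$. For $\ell\ge1$, $P_\ell$ is the path on $0,\dots,\ell$ and $H\times P_\ell$ the Cartesian product (vertex set $V\times\{0,\dots,\ell\}$, with $(x,i)\sim(y,j)$ iff ($\{x,y\}\in E$ and $i=j$) or ($x=y$ and $|i-j|=1$)); $G$ is $\ell$-suspended over $H$ if $G$ is a spanning subgraph of $H\times P_\ell$ containing all edges $\{(x,i),(x,i+1)\}$ and all edges $\{(x,0),(y,0)\}$, $\{(x,\ell),(y,\ell)\}$ for $\{x,y\}\in E$. *)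

theory Defs
  imports Main
begin

definition graph :: "'v set \<Rightarrow> 'v set set \<Rightarrow> bool" where
  "graph V E \<longleftrightarrow> finite V \<and> (\<forall>e\<in>E. \<exists>x y. e = {x, y} \<and> x \<in> V \<and> y \<in> V \<and> x \<noteq> y)"

definition ham_path :: "'v set \<Rightarrow> 'v set set \<Rightarrow> 'v list \<Rightarrow> bool" where
  "ham_path V E ps \<longleftrightarrow> ps \<noteq> [] \<and> distinct ps \<and> set ps = V \<and>
     (\<forall>i. Suc i < length ps \<longrightarrow> {ps ! i, ps ! Suc i} \<in> E)"

text \<open>A Hamiltonian cycle, given as the cyclic list of its vertices; its length is length ps.\<close>
definition ham_cycle :: "'v set \<Rightarrow> 'v set set \<Rightarrow> 'v list \<Rightarrow> bool" where
  "ham_cycle V E cs \<longleftrightarrow> length cs \<ge> 3 \<and> distinct cs \<and> set cs = V \<and>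
     (\<forall>i. Suc i < length cs \<longrightarrow> {cs ! i, cs ! Suc i} \<in> E) \<and> {last cs, hd cs} \<in> E"

definition susp_vertices :: "'v set \<Rightarrow> ('v \<Rightarrow> nat) \<Rightarrow> ('v \<times> nat) set" where
  "susp_vertices V \<alpha> = {(x, i). x \<in> V \<and> i \<le> \<alpha> x}"

definition susp_edges :: "'v set \<Rightarrow> 'v set set \<Rightarrow> ('v \<Rightarrow> nat) \<Rightarrow> ('v \<times> nat) set set" where
  "susp_edges V E \<alpha> =
     {{(x, i), (x, Suc i)} | x i. x \<in> V \<and> i < \<alpha> x}
   \<union> {{(x, 0), (y, 0)} | x y. {x, y} \<in> E}
   \<union> {{(x, \<alpha> x), (y, \<alpha> y)} | x y. {x, y} \<in> E}"

definition prod_vertices :: "'v set \<Rightarrow> nat \<Rightarrow> ('v \<times> nat) set" where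
  "prod_vertices V l = V \<times> {0..l}"

definition prod_edges :: "'v set \<Rightarrow> 'v set set \<Rightarrow> nat \<Rightarrow> ('v \<times> nat) set set" where
  "prod_edges V E l =
     {{(x, i), (y, i)} | x y i. {x, y} \<in> E \<and> i \<le> l}
   \<union> {{(x, i), (x, Suc i)} | x i. x \<in> V \<and> i < l}"

definition l_suspended :: "('v \<times> nat) set \<Rightarrow> ('v \<times> nat) set set \<Rightarrow> 'v set \<Rightarrow> 'v set set \<Rightarrow> nat \<Rightarrow> bool" where
  "l_suspended VG EG V E l \<longleftrightarrow>
     VG = prod_vertices V l \<and> EG \<subseteq> prod_edges V E l \<and>
     {{(x, i), (x, Suc i)} | x i. x \<in> V \<and> i < l} \<subseteq> EG \<and>
     {{(x, 0), (y, 0)} | x y. {x, y} \<in> E} \<subseteq> EG \<and>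
     {{(x, l), (y, l)} | x y. {x, y} \<in> E} \<subseteq> EG"

end

theory Submission
  imports Defs
begin

text \<open>Both Hamiltonian traversals are the same snake: follow the given path or cycle of H and
  run through the column (x, 0), ..., (x, h x) of each of its vertices x, alternately downwards
  and upwards, so that consecutive columns are joined by a top or a bottom copy of an edge of H.
  Nothing depends on the heights.
  For a cycle of even length starting downwards, the snake ends at the top of the last column,
  and the top copy of the closing edge of H closes it; it has length |c| (l + 1), which is even.\<close>

abbreviation walk :: "'a set set \<Rightarrow> 'a list \<Rightarrow> bool" where
  "walk E \<equiv> successively (\<lambda>x y. {x, y} \<in> E)"

lemma ham_path_iff_walk:
  "ham_path V E ps \<longleftrightarrow> ps \<noteq> [] \<and> distinct ps \<and> set ps = V \<and> walk E ps"
  by (simp add: ham_path_def successively_conv_nth)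

lemma ham_cycle_iff_ham_path:
  "ham_cycle V E cs \<longleftrightarrow> length cs \<ge> 3 \<and> ham_path V E cs \<and> {last cs, hd cs} \<in> E"
  by (auto simp: ham_cycle_def ham_path_def)

lemma successively_swapped_edge [simp]: "successively (\<lambda>x y. {y, x} \<in> E) xs \<longleftrightarrow> walk E xs"
  by (simp add: insert_commute)

definition column :: "('v \<Rightarrow> nat) \<Rightarrow> 'v \<Rightarrow> ('v \<times> nat) list" where
  "column h x = map (Pair x) [0..<Suc (h x)]"

lemma column_not_Nil [simp]: "column h x \<noteq> []"
  by (simp add: column_def)

lemma hd_column [simp]: "hd (column h x) = (x, 0)"
  by (simp add: column_def hd_map del: upt_Suc)

lemma last_column [simp]: "last (column h x) = (x, h x)"
  by (simp add: column_def last_map del: upt_Suc)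

lemma set_column [simp]: "set (column h x) = {x} \<times> {0..h x}"
  by (auto simp: column_def atLeastLessThanSuc_atLeastAtMost simp del: upt_Suc)

lemma distinct_column [simp]: "distinct (column h x)"
  by (simp add: column_def distinct_map inj_on_def del: upt_Suc)

lemma length_column [simp]: "length (column h x) = Suc (h x)"
  by (simp add: column_def)

lemma walk_column:
  assumes "\<And>i. i < h x \<Longrightarrow> {(x, i), (x, Suc i)} \<in> EG"
  shows "walk EG (column h x)"
  using assms by (simp add: column_def successively_map successively_conv_nth del: upt_Suc)

fun snake :: "('v \<Rightarrow> nat) \<Rightarrow> bool \<Rightarrow> 'v list \<Rightarrow> ('v \<times> nat) list" where
  "snake h down [] = []"
| "snake h down (x # xs) =
     (if down then rev (column h x) else column h x) @ snake h (\<not> down) xs"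

lemma snake_eq_Nil_iff [simp]: "snake h down p = [] \<longleftrightarrow> p = []"
  by (cases p) auto

lemma set_snake: "set (snake h down p) = susp_vertices (set p) h"
  by (induction p arbitrary: down) (auto simp: susp_vertices_def)

lemma distinct_snake: "distinct p \<Longrightarrow> distinct (snake h down p)"
  by (induction p arbitrary: down) (auto simp: set_snake susp_vertices_def)

lemma length_snake: "length (snake h down p) = (\<Sum>x\<leftarrow>p. Suc (h x))"
  by (induction p arbitrary: down) auto

lemma hd_snake: "p \<noteq> [] \<Longrightarrow> hd (snake h down p) = (hd p, if down then h (hd p) else 0)"
  by (cases p) (auto simp: hd_rev)

lemma last_snake:
  "p \<noteq> [] \<Longrightarrow> last (snake h down p) = (last p, if down = odd (length p) then 0 else h (last p))"
  by (induction p arbitrary: down) (auto simp: last_rev)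

lemma walk_snake:
  assumes "walk E p" and "set p \<subseteq> V" and "susp_edges V E h \<subseteq> EG"
  shows "walk EG (snake h down p)"
  using assms(1,2)
proof (induction p arbitrary: down)
  case (Cons x xs)
  have "walk EG (column h x)"
    using Cons.prems(2) assms(3) by (intro walk_column) (auto simp: susp_edges_def)
  moreover have "walk EG (snake h (\<not> down) xs)"
    using Cons.IH Cons.prems by (auto simp: successively_Cons)
  moreover have "{(x, h x), (hd xs, h (hd xs))} \<in> EG" "{(x, 0), (hd xs, 0)} \<in> EG"
    if "xs \<noteq> []"
  proof -
    have "{x, hd xs} \<in> E"
      using that Cons.prems(1) by (simp add: successively_Cons)
    then show "{(x, h x), (hd xs, h (hd xs))} \<in> EG" "{(x, 0), (hd xs, 0)} \<in> EG"
      using assms(3) unfolding susp_edges_def by blast+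
  qed
  ultimately show ?case
    by (cases "xs = []") (auto simp: successively_append_iff hd_snake hd_rev last_rev)
qed simp

lemma ham_path_snake:
  assumes "ham_path V E p" and "susp_edges V E h \<subseteq> EG"
  shows "ham_path (susp_vertices V h) EG (snake h down p)"
  using assms walk_snake[of E p V h EG down]
  by (auto simp: ham_path_iff_walk set_snake distinct_snake)

lemma ham_cycle_snake:
  assumes "ham_cycle V E c" and "even (length c)" and "susp_edges V E h \<subseteq> EG"
  shows "ham_cycle (susp_vertices V h) EG (snake h True c)"
proof -
  have c: "length c \<ge> 3" "ham_path V E c" "{last c, hd c} \<in> E"
    using assms(1) by (simp_all add: ham_cycle_iff_ham_path)
  have "length c \<le> length (snake h True c)"
    unfolding length_snake by (induction c) auto
  moreover have "{(last c, h (last c)), (hd c, h (hd c))} \<in> EG"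
    using c(3) assms(3) unfolding susp_edges_def by blast
  then have "{last (snake h True c), hd (snake h True c)} \<in> EG"
    using c(1) assms(2) by (simp add: last_snake hd_snake flip: length_greater_0_conv)
  ultimately show ?thesis
    using c ham_path_snake[OF c(2) assms(3)] by (simp add: ham_cycle_iff_ham_path)
qed

lemma l_suspended_vertices: "l_suspended VG EG V E l \<Longrightarrow> VG = susp_vertices V (\<lambda>_. l)"
  unfolding l_suspended_def susp_vertices_def prod_vertices_def by auto

lemma l_suspended_edges_subset: "l_suspended VG EG V E l \<Longrightarrow> susp_edges V E (\<lambda>_. l) \<subseteq> EG"
  unfolding l_suspended_def susp_edges_def by simp

theorem lemma3p3:
  fixes V :: "'v set" and E :: "'v set set"
  assumes "graph V E"
  shows "(\<forall>(\<alpha>::'v \<Rightarrow> nat) VG EG.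
            (\<forall>x\<in>V. \<alpha> x \<ge> 2) \<longrightarrow> VG = susp_vertices V \<alpha> \<longrightarrow> EG = susp_edges V E \<alpha> \<longrightarrow>
            (\<exists>p. ham_path V E p) \<longrightarrow> (\<exists>q. ham_path VG EG q))
       \<and> (\<forall>(l::nat) VG EG. l \<ge> 1 \<longrightarrow> l_suspended VG EG V E l \<longrightarrow>
            (\<exists>c. ham_cycle V E c \<and> even (length c)) \<longrightarrow>
            (\<exists>d. ham_cycle VG EG d \<and> even (length d)))"
proof (intro conjI allI impI)
  fix \<alpha> :: "'v \<Rightarrow> nat" and VG EG
  assume VG: "VG = susp_vertices V \<alpha>" and EG: "EG = susp_edges V E \<alpha>"
    and "\<exists>p. ham_path V E p"
  then obtain p where "ham_path V E p"
    by blast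
  then have "ham_path VG EG (snake \<alpha> True p)"
    unfolding VG EG by (rule ham_path_snake) simp
  then show "\<exists>q. ham_path VG EG q" ..
next
  fix l :: nat and VG EG
  assume susp: "l_suspended VG EG V E l" and "\<exists>c. ham_cycle V E c \<and> even (length c)"
  then obtain c where c: "ham_cycle V E c" "even (length c)"
    by blast
  let ?d = "snake (\<lambda>_. l) True c"
  have "ham_cycle VG EG ?d"
    unfolding l_suspended_vertices[OF susp]
    using c l_suspended_edges_subset[OF susp] by (rule ham_cycle_snake)
  moreover have "even (length ?d)"
    using c(2) by (simp add: length_snake sum_list_triv)
  ultimately show "\<exists>d. ham_cycle VG EG d \<and> even (length d)"
    by blast
qed

end
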